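(* $\operatorname{BSR}(5,3)\ge 9$. In particular, the biquadratic form \[P(\mathbf{x},\mathbf{y})=x_1^2y_1^2+x_1^2y_2^2+x_2^2y_1^2+x_2^2y_3^2+x_3^2y_2^2+x_3^2y_3^2+x_4^2y_1^2+x_5^2y_2^2+(x_1y_3+x_4y_2)^2\] on $\mathbb{R}^5\times\mathbb{R}^3$ has SOS rank $9$ (i.e., it cannot be written as a sum of fewer than 9 squares of bilinear forms).
   Context: An $m\times n$ biquadratic form is a polynomial $P(\mathbf{x},\mathbf{y})=\sum_{i,k=1}^m\sum_{j,l=1}^n a_{ijkl}x_ix_ky_jy_l$ with real coefficients, $\mathbf{x}\in\mathbb{R}^m$, $\mathbf{y}\in\mathbb{R}^n$. It is SOS if $P=\sum_{p=1}^r f_p^2$ for some real bilinear forms $f_p(\mathbf{x},\mathbf{y})=\sum_{i,j}c^{(p)}_{ij}x_iy_j$; the least such $r$ is the SOS rank $\operatorname{sos}(P)$. $\operatorname{BSR}(m,n)$ is the maximum of $\operatorname{sos}(P)$ over all $m\times n$ SOS biquadratic forms $P$. *)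

theory Defs
  imports Complex_Main "HOL-Library.Extended_Nat"
begin

(* Vectors x in R^m, y in R^n are functions nat => real; only the
   coordinates 0..m-1 (resp. 0..n-1) are used (0-based indexing). *)

definition biquad_eval ::
  "nat \<Rightarrow> nat \<Rightarrow> (nat \<Rightarrow> nat \<Rightarrow> nat \<Rightarrow> nat \<Rightarrow> real) \<Rightarrow> (nat \<Rightarrow> real) \<Rightarrow> (nat \<Rightarrow> real) \<Rightarrow> real" where
  "biquad_eval m n a x y =
     (\<Sum>i<m. \<Sum>k<m. \<Sum>j<n. \<Sum>l<n. a i j k l * x i * x k * y j * y l)"

definition is_biquadratic ::
  "nat \<Rightarrow> nat \<Rightarrow> ((nat \<Rightarrow> real) \<Rightarrow> (nat \<Rightarrow> real) \<Rightarrow> real) \<Rightarrow> bool" where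
  "is_biquadratic m n P \<longleftrightarrow> (\<exists>a. \<forall>x y. P x y = biquad_eval m n a x y)"

definition bilin_eval ::
  "nat \<Rightarrow> nat \<Rightarrow> (nat \<Rightarrow> nat \<Rightarrow> real) \<Rightarrow> (nat \<Rightarrow> real) \<Rightarrow> (nat \<Rightarrow> real) \<Rightarrow> real" where
  "bilin_eval m n c x y = (\<Sum>i<m. \<Sum>j<n. c i j * x i * y j)"

definition sos_repr ::
  "nat \<Rightarrow> nat \<Rightarrow> ((nat \<Rightarrow> real) \<Rightarrow> (nat \<Rightarrow> real) \<Rightarrow> real) \<Rightarrow> nat \<Rightarrow> bool" where
  "sos_repr m n P r \<longleftrightarrow>
     (\<exists>cs :: nat \<Rightarrow> nat \<Rightarrow> nat \<Rightarrow> real.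
        \<forall>x y. P x y = (\<Sum>p<r. (bilin_eval m n (cs p) x y)^2))"

definition is_sos ::
  "nat \<Rightarrow> nat \<Rightarrow> ((nat \<Rightarrow> real) \<Rightarrow> (nat \<Rightarrow> real) \<Rightarrow> real) \<Rightarrow> bool" where
  "is_sos m n P \<longleftrightarrow> (\<exists>r. sos_repr m n P r)"

definition sos_rank ::
  "nat \<Rightarrow> nat \<Rightarrow> ((nat \<Rightarrow> real) \<Rightarrow> (nat \<Rightarrow> real) \<Rightarrow> real) \<Rightarrow> nat" where
  "sos_rank m n P = (LEAST r. sos_repr m n P r)"

definition BSR :: "nat \<Rightarrow> nat \<Rightarrow> enat" where
  "BSR m n = (SUP P \<in> {P. is_biquadratic m n P \<and> is_sos m n P}. enat (sos_rank m n P))"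

end

theory Submission
  imports Defs
begin

(* Write f_p = sum c_p(i,j) x_i y_j and let c_ij be the vector (c_p(i,j))_p in R^r.  Evaluating
   P at (e_i +- e_k, e_j +- e_l) and polarizing yields <c_ij, c_kl> + <c_il, c_kj> for every
   SOS representation.  For the given P this forces c_11 = c_20 = c_32 = c_40 = c_42 = 0 (their
   x_i^2 y_j^2 coefficients vanish) and c_31 = c_02 (both are unit vectors, with inner product 1
   by the cross term x_0 x_3 y_1 y_2), after which the nine vectors c_00, c_01, c_02, c_10, c_12,
   c_21, c_22, c_30, c_41 are orthonormal; hence r >= 9, and the nine squares defining P show
   that 9 is attained. *)

definition unit_vec :: "nat \<Rightarrow> nat \<Rightarrow> real" where
  "unit_vec i t = (if t = i then 1 else 0)"

lemma sum_unit_vec_mult: "i < m \<Longrightarrow> (\<Sum>t<m. unit_vec i t * f t) = f i"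
  by (simp add: unit_vec_def if_distrib[where f = "\<lambda>x. x * _"] cong: if_cong)

definition dot :: "nat \<Rightarrow> (nat \<Rightarrow> real) \<Rightarrow> (nat \<Rightarrow> real) \<Rightarrow> real" where
  "dot r u v = (\<Sum>p<r. u p * v p)"

lemma dot_commute: "dot r u v = dot r v u"
  by (simp add: dot_def mult.commute)

lemma dot_self_eq_0_iff: "dot r u u = 0 \<longleftrightarrow> (\<forall>p<r. u p = 0)"
  unfolding dot_def by (subst sum_nonneg_eq_0_iff) auto

lemma dot_diff_self:
  "dot r (\<lambda>p. u p - w p) (\<lambda>p. u p - w p) = dot r u u - 2 * dot r u w + dot r w w"
  by (simp add: dot_def algebra_simps sum.distrib sum_subtractf sum_distrib_left)

lemma dot_self_eq_0_imp_dot_eq_0: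
  assumes "dot r u u = 0"
  shows "dot r u w = 0"
  using assms unfolding dot_self_eq_0_iff by (auto simp: dot_def intro!: sum.neutral)

lemma dot_cong_left:
  assumes "dot r u u + dot r w w = 2 * dot r u w"
  shows "dot r u z = dot r w z"
proof -
  have "dot r (\<lambda>p. u p - w p) (\<lambda>p. u p - w p) = 0"
    using assms by (simp add: dot_diff_self)
  then show ?thesis
    unfolding dot_self_eq_0_iff by (auto simp: dot_def intro!: sum.cong)
qed

lemma orthonormal_card_le:
  assumes "finite K"
    and orth: "\<And>a b. a \<in> K \<Longrightarrow> b \<in> K \<Longrightarrow>
      dot r (V a) (V b) = (if a = b then 1 else 0)"
  shows "card K \<le> r"
proof -
  have bessel: "(\<Sum>a\<in>K. (V a q)\<^sup>2) \<le> 1" if "q < r" for q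
  proof -
    define s where "s t = (\<Sum>a\<in>K. V a q * V a t)" for t
    have "dot r s s = (\<Sum>a\<in>K. \<Sum>b\<in>K. V a q * V b q * dot r (V a) (V b))"
      by (simp add: s_def dot_def sum_product sum_distrib_left algebra_simps
          sum.swap[of _ "{..<r}"])
    also have "\<dots> = (\<Sum>a\<in>K. (V a q)\<^sup>2)"
      by (simp add: orth power2_eq_square if_distrib[where f = "\<lambda>x. _ * x"] \<open>finite K\<close>
          cong: if_cong)
    finally have s_s: "dot r s s = (\<Sum>a\<in>K. (V a q)\<^sup>2)" .
    have e_s: "dot r (unit_vec q) s = (\<Sum>a\<in>K. (V a q)\<^sup>2)"
      using that by (simp add: dot_def sum_unit_vec_mult s_def power2_eq_square)
    have e_e: "dot r (unit_vec q) (unit_vec q) = 1"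
      unfolding dot_def sum_unit_vec_mult[OF that] by (simp add: unit_vec_def)
    have "0 \<le> dot r (\<lambda>p. unit_vec q p - s p) (\<lambda>p. unit_vec q p - s p)"
      by (simp add: dot_def sum_nonneg)
    then show ?thesis
      by (simp add: dot_diff_self s_s e_s e_e)
  qed
  have "real (card K) = (\<Sum>a\<in>K. dot r (V a) (V a))"
    by (simp add: orth)
  also have "\<dots> = (\<Sum>p<r. \<Sum>a\<in>K. (V a p)\<^sup>2)"
    by (simp add: dot_def power2_eq_square sum.swap[of _ K])
  also have "\<dots> \<le> (\<Sum>p<r. 1)"
    by (rule sum_mono) (simp add: bessel)
  finally show ?thesis
    by simp
qed

definition coeff_vec :: "(nat \<Rightarrow> nat \<Rightarrow> nat \<Rightarrow> real) \<Rightarrow> nat \<times> nat \<Rightarrow> nat \<Rightarrow> real" where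
  "coeff_vec cs a p = cs p (fst a) (snd a)"

definition unit_comb :: "nat \<Rightarrow> real \<Rightarrow> nat \<Rightarrow> nat \<Rightarrow> real" where
  "unit_comb i s k t = unit_vec i t + s * unit_vec k t"

definition polar ::
  "((nat \<Rightarrow> real) \<Rightarrow> (nat \<Rightarrow> real) \<Rightarrow> real) \<Rightarrow> nat \<Rightarrow> nat \<Rightarrow> nat \<Rightarrow> nat \<Rightarrow> real" where
  "polar P i j k l =
    (P (unit_comb i 1 k) (unit_comb j 1 l) - P (unit_comb i (-1) k) (unit_comb j 1 l)
   - P (unit_comb i 1 k) (unit_comb j (-1) l) + P (unit_comb i (-1) k) (unit_comb j (-1) l)) / 8"

lemma bilin_eval_unit_comb:
  assumes "i < m" "j < n" "k < m" "l < n"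
  shows "bilin_eval m n c (unit_comb i s k) (unit_comb j s' l)
    = c i j + s' * c i l + s * c k j + s * s' * c k l"
  using assms
  by (simp add: bilin_eval_def unit_comb_def algebra_simps sum.distrib sum_distrib_left[symmetric]
      sum_unit_vec_mult flip: sum_distrib_right)

lemma sos_repr_polar:
  assumes rep: "\<And>x y. P x y = (\<Sum>p<r. (bilin_eval m n (cs p) x y)^2)"
    and "i < m" "j < n" "k < m" "l < n"
  shows "dot r (coeff_vec cs (i, j)) (coeff_vec cs (k, l))
      + dot r (coeff_vec cs (i, l)) (coeff_vec cs (k, j)) = polar P i j k l"
  unfolding polar_def rep bilin_eval_unit_comb[OF assms(2-5)] dot_def coeff_vec_def
  by (simp add: power2_eq_square algebra_simps sum_divide_distrib
      flip: sum.distrib sum_subtractf)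
    (rule sum.cong; simp)

lemma bilin_eval_square:
  "(bilin_eval m n c x y)\<^sup>2 = biquad_eval m n (\<lambda>i j k l. c i j * c k l) x y"
  by (simp add: bilin_eval_def biquad_eval_def power2_eq_square sum_product algebra_simps)

lemma sum_biquad_eval:
  "(\<Sum>p<r. biquad_eval m n (a p) x y) = biquad_eval m n (\<lambda>i j k l. \<Sum>p<r. a p i j k l) x y"
  by (simp add: biquad_eval_def sum_distrib_right sum.swap[of _ "{..<r}"])

lemma sos_repr_is_biquadratic:
  assumes "sos_repr m n P r"
  shows "is_biquadratic m n P"
  using assms unfolding sos_repr_def is_biquadratic_def
  by (auto simp: bilin_eval_square sum_biquad_eval)

lemma sos_rank_eqI:
  assumes "sos_repr m n P N" and "\<And>r. sos_repr m n P r \<Longrightarrow> N \<le> r"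
  shows "sos_rank m n P = N"
  unfolding sos_rank_def using assms by (rule Least_equality)

lemma sos_rank_le_BSR:
  assumes "is_biquadratic m n P" and "is_sos m n P"
  shows "enat (sos_rank m n P) \<le> BSR m n"
  unfolding BSR_def using assms by (auto intro: SUP_upper)

definition unit_matrix :: "nat \<Rightarrow> nat \<Rightarrow> nat \<Rightarrow> nat \<Rightarrow> real" where
  "unit_matrix i j a b = unit_vec i a * unit_vec j b"

lemma bilin_eval_unit_matrix: "i < m \<Longrightarrow> j < n \<Longrightarrow>
  bilin_eval m n (unit_matrix i j) x y = x i * y j"
  by (simp add: bilin_eval_def unit_matrix_def mult.assoc sum_unit_vec_mult flip: sum_distrib_left)

lemma bilin_eval_add:
  "bilin_eval m n (\<lambda>a b. c a b + d a b) x y = bilin_eval m n c x y + bilin_eval m n d x y"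
  by (simp add: bilin_eval_def algebra_simps sum.distrib)

definition bsr53_form :: "(nat \<Rightarrow> real) \<Rightarrow> (nat \<Rightarrow> real) \<Rightarrow> real" where
  "bsr53_form x y =
      (x 0)^2 * (y 0)^2 + (x 0)^2 * (y 1)^2 + (x 1)^2 * (y 0)^2 + (x 1)^2 * (y 2)^2
    + (x 2)^2 * (y 1)^2 + (x 2)^2 * (y 2)^2 + (x 3)^2 * (y 0)^2 + (x 4)^2 * (y 1)^2
    + (x 0 * y 2 + x 3 * y 1)^2"

definition bsr53_witness :: "nat \<Rightarrow> nat \<Rightarrow> nat \<Rightarrow> real" where
  "bsr53_witness = nth [unit_matrix 0 0, unit_matrix 0 1, unit_matrix 1 0, unit_matrix 1 2,
     unit_matrix 2 1, unit_matrix 2 2, unit_matrix 3 0, unit_matrix 4 1,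
     \<lambda>a b. unit_matrix 0 2 a b + unit_matrix 3 1 a b]"

lemma bsr53_form_sos_repr: "sos_repr 5 3 bsr53_form 9"
  unfolding sos_repr_def
proof (intro exI allI)
  fix x y
  show "bsr53_form x y = (\<Sum>p<9. (bilin_eval 5 3 (bsr53_witness p) x y)\<^sup>2)"
    by (simp add: bsr53_form_def bsr53_witness_def bilin_eval_add bilin_eval_unit_matrix
        numeral_eq_Suc algebra_simps)
qed

definition bsr53_pairs :: "(nat \<times> nat) set" where
  "bsr53_pairs = {(0, 0), (0, 1), (0, 2), (1, 0), (1, 2), (2, 1), (2, 2), (3, 0), (4, 1)}"

locale bsr53_gram =
  fixes r :: nat and v :: "nat \<times> nat \<Rightarrow> nat \<Rightarrow> real"
  assumes polar_eq: "\<And>i j k l. i < 5 \<Longrightarrow> j < 3 \<Longrightarrow> k < 5 \<Longrightarrow> l < 3 \<Longrightarrow>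
    dot r (v (i, j)) (v (k, l)) + dot r (v (i, l)) (v (k, j)) = polar bsr53_form i j k l"
begin

lemmas polar_simps = polar_def bsr53_form_def unit_comb_def unit_vec_def

(* Keeps 1 :: nat a numeral, so the facts about v (3, 1) below stay usable as rewrite rules. *)
declare One_nat_def [simp del]

lemma dot_vanish:
  assumes "z \<in> {(1, 1), (2, 0), (3, 2), (4, 0), (4, 2)}"
  shows "dot r (v z) w = 0" "dot r w (v z) = 0"
proof -
  have "dot r (v z) (v z) = 0"
    using assms polar_eq[of "fst z" "snd z" "fst z" "snd z"] by (auto simp: polar_simps)
  then show "dot r (v z) w = 0" "dot r w (v z) = 0"
    by (simp_all add: dot_self_eq_0_imp_dot_eq_0 dot_commute[of r w])
qed

lemma dot_31_eq_dot_02: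
  "dot r (v (3, 1)) w = dot r (v (0, 2)) w" "dot r w (v (3, 1)) = dot r w (v (0, 2))"
proof -
  have "dot r (v (3, 1)) (v (3, 1)) + dot r (v (0, 2)) (v (0, 2)) = 2 * dot r (v (3, 1)) (v (0, 2))"
    using polar_eq[of 3 1 3 1] polar_eq[of 0 2 0 2] polar_eq[of 3 1 0 2]
    by (simp add: polar_simps dot_vanish)
  from dot_cong_left[OF this]
  show "dot r (v (3, 1)) w = dot r (v (0, 2)) w" "dot r w (v (3, 1)) = dot r w (v (0, 2))"
    by (simp_all add: dot_commute[of r w])
qed

(* Polarization couples <c_00, c_12> with <c_02, c_10>, <c_01, c_22> with <c_02, c_21>, and
   <c_01, c_30> with <c_00, c_31>; replacing c_02 by c_31 (or back) decouples them. *)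
lemma dot_02_eq_0: "dot r (v (0, 2)) (v (1, 0)) = 0" "dot r (v (0, 2)) (v (2, 1)) = 0"
  "dot r (v (0, 0)) (v (0, 2)) = 0"
  using polar_eq[of 3 1 1 0] polar_eq[of 3 1 2 1] polar_eq[of 0 0 0 2]
  by (simp_all add: polar_simps dot_vanish dot_31_eq_dot_02 dot_commute[of r "v (0, 2)"])

lemma orthonormal:
  assumes "a \<in> bsr53_pairs" "b \<in> bsr53_pairs"
  shows "dot r (v a) (v b) = (if a = b then 1 else 0)"
  using assms polar_eq[of "fst a" "snd a" "fst b" "snd b"]
  unfolding bsr53_pairs_def insert_iff empty_iff simp_thms
  by (elim disjE) (simp_all add: polar_simps dot_vanish dot_31_eq_dot_02 dot_02_eq_0
      dot_02_eq_0[THEN trans[OF dot_commute]] dot_commute)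

end

lemma bsr53_form_sos_repr_ge:
  assumes "sos_repr 5 3 bsr53_form r"
  shows "9 \<le> r"
proof -
  obtain cs where rep: "\<And>x y. bsr53_form x y = (\<Sum>p<r. (bilin_eval 5 3 (cs p) x y)\<^sup>2)"
    using assms unfolding sos_repr_def by blast
  interpret bsr53_gram r "coeff_vec cs"
    using rep by unfold_locales (rule sos_repr_polar)
  have "card bsr53_pairs \<le> r"
    by (rule orthonormal_card_le[where V = "coeff_vec cs"])
      (simp_all add: bsr53_pairs_def orthonormal)
  then show ?thesis
    by (simp add: bsr53_pairs_def)
qed

theorem corollary4p2:
  fixes P :: "(nat \<Rightarrow> real) \<Rightarrow> (nat \<Rightarrow> real) \<Rightarrow> real"
  defines "P \<equiv> (\<lambda>x y.
      (x 0)^2 * (y 0)^2 + (x 0)^2 * (y 1)^2 + (x 1)^2 * (y 0)^2 + (x 1)^2 * (y 2)^2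
    + (x 2)^2 * (y 1)^2 + (x 2)^2 * (y 2)^2 + (x 3)^2 * (y 0)^2 + (x 4)^2 * (y 1)^2
    + (x 0 * y 2 + x 3 * y 1)^2)"
  shows "BSR 5 3 \<ge> 9 \<and> is_biquadratic 5 3 P \<and> is_sos 5 3 P \<and> sos_rank 5 3 P = 9"
proof -
  have P_eq: "P = bsr53_form"
    by (simp add: P_def bsr53_form_def fun_eq_iff)
  have rank: "sos_rank 5 3 P = 9"
    unfolding P_eq using bsr53_form_sos_repr bsr53_form_sos_repr_ge by (rule sos_rank_eqI)
  have biquadratic: "is_biquadratic 5 3 P"
    unfolding P_eq using bsr53_form_sos_repr by (rule sos_repr_is_biquadratic)
  have sos: "is_sos 5 3 P"
    unfolding P_eq is_sos_def using bsr53_form_sos_repr ..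
  have "BSR 5 3 \<ge> 9"
    using sos_rank_le_BSR[OF biquadratic sos] rank by (simp add: numeral_eq_enat)
  with biquadratic sos rank show ?thesis
    by blast
qed

end
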